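(* Let $\alpha\ge 2$, let $\gamma_t,\gamma_r>0$, and let $a,b>0$. Let $\beta_t,\beta_r,D_t,D_r>0$, and suppose there exist real numbers $\nu>0$, $\mu_1,\mu_2\ge 0$ and $\lambda$ satisfying the stationarity conditions $$(2^{\gamma_t}-1)\,\mu_1\,\frac{a\,D_t^{\alpha}}{\beta_t^{2}}=\lambda,\qquad (2^{\gamma_r}-1)\,\mu_2\,\frac{b\,D_r^{\alpha}}{\beta_r^{2}}=\lambda,\qquad \mu_1=\nu,\qquad \mu_2=(2^{\gamma_t}-1)\mu_1+\nu .$$ Define $|h_t|^2=\dfrac{\beta_t}{a\,D_t^{\alpha}}$ and $|h_r|^2=\dfrac{\beta_r}{b\,D_r^{\alpha}}$. Then $$|h_t|^2\le |h_r|^2 \iff \beta_r\le \frac{2^{\gamma_t}\,(2^{\gamma_r}-1)}{2^{\gamma_t}-1}\,\beta_t .$$ Symmetrically (roles of $t$ and $r$ exchanged): if instead $(2^{\gamma_r}-1)\mu_1 bD_r^{\alpha}/\beta_r^2=\lambda$, $(2^{\gamma_t}-1)\mu_2 aD_t^{\alpha}/\beta_t^2=\lambda$, $\mu_1=\nu>0$, $\mu_2=(2^{\gamma_r}-1)\mu_1+\nu$, then $|h_t|^2\ge |h_r|^2\iff \beta_t\le \dfrac{2^{\gamma_r}(2^{\gamma_t}-1)}{2^{\gamma_r}-1}\beta_r$.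
   Context: Setting: an access point (AP) serves a transmitted user $t$ and a reflected user $r$ via a simultaneously transmitting and reflecting reconfigurable intelligent surface (STAR-RIS) using NOMA. For user $k\in\{t,r\}$, $\beta_k\in(0,1]$ is the energy-splitting (amplitude-squared) coefficient with $\beta_t+\beta_r=1$, $D_k$ is the distance from the STAR-RIS to user $k$, $\alpha=\alpha_{RU}$ the path-loss exponent, $\gamma_k$ the rate requirement, $p_k$ the transmit power, and $a=\sigma^2/(\rho_0 c_t)$, $b=\sigma^2/(\rho_0 c_r)$ with $\sigma^2,\rho_0,c_t,c_r>0$ constants, so that the effective channel power gains are $\rho_0\beta_kc_k/D_k^\alpha$ (proportional to the quantities $|h_k|^2$ above). The stated stationarity conditions are those of the Lagrangian $\nu(p_t+p_r-P_{\max})+\lambda(\beta_t+\beta_r-1)+\mu_1[(2^{\gamma_t}-1)(aD_t^\alpha/\beta_t+p_r)-p_t]+\mu_2[(2^{\gamma_r}-1)bD_r^\alpha/\beta_r-p_r]$ with respect to $\beta_t,\beta_r,p_t,p_r$, arising from the NOMA QoS constraints when user $r$ performs successive interference cancellation (decoding order $\lambda(r)=1$); the symmetric case corresponds to decoding order $\lambda(t)=1$. The lemma says that, at such stationary points, the SIC decoding-order constraint is equivalent to a linear constraint in $(\beta_t,\beta_r)$. *)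

theory Defs
  imports Complex_Main
begin

definition ht2 :: "real \<Rightarrow> real \<Rightarrow> real \<Rightarrow> real \<Rightarrow> real" where
  "ht2 a \<alpha> \<beta>t Dt = \<beta>t / (a * Dt powr \<alpha>)"

definition hr2 :: "real \<Rightarrow> real \<Rightarrow> real \<Rightarrow> real \<Rightarrow> real" where
  "hr2 b \<alpha> \<beta>r Dr = \<beta>r / (b * Dr powr \<alpha>)"

end

theory Submission
  imports Defs
begin

text \<open>At a stationary point the multiplier \<open>\<nu>\<close> cancels from the two \<open>\<beta>\<close>-conditions, leaving the
  balance \<open>g\<^sub>1 c\<^sub>1 y\<^sup>2 = g\<^sub>2 (g\<^sub>1 + 1) c\<^sub>2 x\<^sup>2\<close> between the energy-splitting coefficients \<open>x, y\<close>.
  Multiplying the gain comparison \<open>x / c\<^sub>1 \<le> y / c\<^sub>2\<close> by \<open>g\<^sub>1 c\<^sub>1 y\<close> and substituting this balance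
  turns the quadratic relation into the linear one \<open>g\<^sub>1 y \<le> g\<^sub>2 (g\<^sub>1 + 1) x\<close>.\<close>

lemma stationarity_balance:
  fixes g\<^sub>1 g\<^sub>2 c\<^sub>1 c\<^sub>2 x y \<nu> :: real
  assumes "x > 0" "y > 0" "\<nu> > 0"
    and "g\<^sub>1 * \<nu> * (c\<^sub>1 / x\<^sup>2) = g\<^sub>2 * (g\<^sub>1 * \<nu> + \<nu>) * (c\<^sub>2 / y\<^sup>2)"
  shows "g\<^sub>1 * c\<^sub>1 * y\<^sup>2 = g\<^sub>2 * (g\<^sub>1 + 1) * c\<^sub>2 * x\<^sup>2"
proof -
  have "\<nu> * (g\<^sub>1 * c\<^sub>1 * y\<^sup>2) = \<nu> * (g\<^sub>2 * (g\<^sub>1 + 1) * c\<^sub>2 * x\<^sup>2)"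
    using assms by (simp add: field_simps)
  then show ?thesis
    using \<open>\<nu> > 0\<close> by simp
qed

lemma gain_le_iff_of_balance:
  fixes g k c\<^sub>1 c\<^sub>2 x y :: real
  assumes "g > 0" "c\<^sub>1 > 0" "c\<^sub>2 > 0" "x > 0" "y > 0"
    and balance: "g * c\<^sub>1 * y\<^sup>2 = k * c\<^sub>2 * x\<^sup>2"
  shows "x / c\<^sub>1 \<le> y / c\<^sub>2 \<longleftrightarrow> y \<le> k / g * x"
proof -
  have "x / c\<^sub>1 \<le> y / c\<^sub>2 \<longleftrightarrow> (g * y) * (c\<^sub>2 * x) \<le> (g * y) * (c\<^sub>1 * y)"
    using assms by (simp add: divide_simps mult.commute)
  also have "(g * y) * (c\<^sub>1 * y) = (c\<^sub>2 * x) * (k * x)"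
    using balance by (simp add: power2_eq_square algebra_simps)
  also have "(g * y) * (c\<^sub>2 * x) \<le> (c\<^sub>2 * x) * (k * x) \<longleftrightarrow> g * y \<le> k * x"
    using assms by (simp add: mult.commute)
  also have "\<dots> \<longleftrightarrow> y \<le> k / g * x"
    using \<open>g > 0\<close> by (simp add: pos_le_divide_eq mult.commute)
  finally show ?thesis .
qed

lemma stationary_gain_order_iff_linear:
  fixes g\<^sub>1 g\<^sub>2 c\<^sub>1 c\<^sub>2 x y \<nu> :: real
  assumes "g\<^sub>1 > 0" "c\<^sub>1 > 0" "c\<^sub>2 > 0" "x > 0" "y > 0" "\<nu> > 0"
    and "g\<^sub>1 * \<nu> * (c\<^sub>1 / x\<^sup>2) = g\<^sub>2 * (g\<^sub>1 * \<nu> + \<nu>) * (c\<^sub>2 / y\<^sup>2)"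
  shows "x / c\<^sub>1 \<le> y / c\<^sub>2 \<longleftrightarrow> y \<le> (g\<^sub>1 + 1) * g\<^sub>2 / g\<^sub>1 * x"
  using gain_le_iff_of_balance[of g\<^sub>1 c\<^sub>1 c\<^sub>2 x y "g\<^sub>2 * (g\<^sub>1 + 1)"]
    stationarity_balance[of x y \<nu> g\<^sub>1 c\<^sub>1 g\<^sub>2 c\<^sub>2] assms
  by (simp add: mult.commute)

theorem lemma1:
  fixes \<alpha> \<gamma>t \<gamma>r a b \<beta>t \<beta>r Dt Dr :: real
  assumes "\<alpha> \<ge> 2" and "\<gamma>t > 0" and "\<gamma>r > 0" and "a > 0" and "b > 0"
    and "\<beta>t > 0" and "\<beta>r > 0" and "Dt > 0" and "Dr > 0"
  shows "(\<forall>\<nu> \<mu>1 \<mu>2 lam::real. \<nu> > 0 \<and> \<mu>1 \<ge> 0 \<and> \<mu>2 \<ge> 0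
            \<and> (2 powr \<gamma>t - 1) * \<mu>1 * (a * Dt powr \<alpha> / \<beta>t^2) = lam
            \<and> (2 powr \<gamma>r - 1) * \<mu>2 * (b * Dr powr \<alpha> / \<beta>r^2) = lam
            \<and> \<mu>1 = \<nu> \<and> \<mu>2 = (2 powr \<gamma>t - 1) * \<mu>1 + \<nu>
          \<longrightarrow> (ht2 a \<alpha> \<beta>t Dt \<le> hr2 b \<alpha> \<beta>r Dr \<longleftrightarrow>
               \<beta>r \<le> 2 powr \<gamma>t * (2 powr \<gamma>r - 1) / (2 powr \<gamma>t - 1) * \<beta>t))
       \<and> (\<forall>\<nu> \<mu>1 \<mu>2 lam::real. \<nu> > 0 \<and> \<mu>1 \<ge> 0 \<and> \<mu>2 \<ge> 0
            \<and> (2 powr \<gamma>r - 1) * \<mu>1 * (b * Dr powr \<alpha> / \<beta>r^2) = lam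
            \<and> (2 powr \<gamma>t - 1) * \<mu>2 * (a * Dt powr \<alpha> / \<beta>t^2) = lam
            \<and> \<mu>1 = \<nu> \<and> \<mu>2 = (2 powr \<gamma>r - 1) * \<mu>1 + \<nu>
          \<longrightarrow> (ht2 a \<alpha> \<beta>t Dt \<ge> hr2 b \<alpha> \<beta>r Dr \<longleftrightarrow>
               \<beta>t \<le> 2 powr \<gamma>r * (2 powr \<gamma>t - 1) / (2 powr \<gamma>r - 1) * \<beta>r))"
proof -
  have rates: "2 powr \<gamma>t - 1 > 0" "2 powr \<gamma>r - 1 > 0"
    using assms by auto
  have losses: "a * Dt powr \<alpha> > 0" "b * Dr powr \<alpha> > 0"
    using assms by auto
  show ?thesis
    unfolding ht2_def hr2_def
    using stationary_gain_order_iff_linear[of "2 powr \<gamma>t - 1" "a * Dt powr \<alpha>" "b * Dr powr \<alpha>"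
        \<beta>t \<beta>r _ "2 powr \<gamma>r - 1"]
      stationary_gain_order_iff_linear[of "2 powr \<gamma>r - 1" "b * Dr powr \<alpha>" "a * Dt powr \<alpha>"
        \<beta>r \<beta>t _ "2 powr \<gamma>t - 1"]
      rates losses assms
    by auto
qed

end
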